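(* Let $M\in\{0,1\}^{m\times n}$ with $m,n$ even. Then there exist $X_0\subset[m]$ and $Y_0\subset[n]$ with $|X_0|=m/2$ and $|Y_0|=n/2$ such that $$\operatorname{disc}(X_0,Y_0)\leq -\operatorname{disc}^{-}(M)/12.$$
   Context: For $M\in\{0,1\}^{m\times n}$, $|M|$ is the number of $1$ entries, $p=|M|/(mn)$, and for $X\subset[m]$, $Y\subset[n]$, $\operatorname{disc}(X,Y)=|M[X\times Y]|-p|X||Y|$, where $|M[X\times Y]|$ is the number of $1$ entries of the submatrix with rows $X$ and columns $Y$. The negative discrepancy is $\operatorname{disc}^{-}(M)=\max_{X\subset[m],Y\subset[n]}(-\operatorname{disc}(X,Y))$. *)

theory Defs
  imports Main Complex_Main
begin

text \<open>A 0/1 matrix with m rows and n columns is modelled as a function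
  M :: nat => nat => nat on the index ranges {0..<m} x {0..<n}, entries in {0,1}.\<close>

definition zero_one_matrix :: "nat \<Rightarrow> nat \<Rightarrow> (nat \<Rightarrow> nat \<Rightarrow> nat) \<Rightarrow> bool" where
  "zero_one_matrix m n M \<longleftrightarrow> (\<forall>i<m. \<forall>j<n. M i j \<in> {0, 1})"

definition ones :: "(nat \<Rightarrow> nat \<Rightarrow> nat) \<Rightarrow> nat set \<Rightarrow> nat set \<Rightarrow> nat" where
  "ones M X Y = (\<Sum>i\<in>X. \<Sum>j\<in>Y. M i j)"

definition density :: "nat \<Rightarrow> nat \<Rightarrow> (nat \<Rightarrow> nat \<Rightarrow> nat) \<Rightarrow> real" where
  "density m n M = real (ones M {0..<m} {0..<n}) / (real m * real n)"

definition disc :: "nat \<Rightarrow> nat \<Rightarrow> (nat \<Rightarrow> nat \<Rightarrow> nat) \<Rightarrow> nat set \<Rightarrow> nat set \<Rightarrow> real" where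
  "disc m n M X Y = real (ones M X Y) - density m n M * real (card X) * real (card Y)"

definition neg_disc :: "nat \<Rightarrow> nat \<Rightarrow> (nat \<Rightarrow> nat \<Rightarrow> nat) \<Rightarrow> real" where
  "neg_disc m n M = Max {- disc m n M X Y | X Y. X \<subseteq> {0..<m} \<and> Y \<subseteq> {0..<n}}"

end

theory Submission
  imports Defs
begin

text \<open>Write \<open>disc(X, Y) = 1\<^sub>X\<^sup>T A 1\<^sub>Y\<close> with the centred matrix \<open>A = M - p\<close>, whose entries sum
  to zero. Let \<open>(X, Y)\<close> attain \<open>D = disc\<^sup>-(M)\<close> and split \<open>1\<^sub>X = a + x\<close>, \<open>1\<^sub>Y = b + y\<close> with
  \<open>a = |X|/m\<close>, \<open>b = |Y|/n\<close>; then \<open>x\<close>, \<open>y\<close> have zero sum and \<open>-D = R + b Q + a P\<close> with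
  \<open>R = x\<^sup>T A y\<close>, \<open>Q = x\<^sup>T A 1\<close>, \<open>P = 1\<^sup>T A y\<close>. One of \<open>|R|, |P|, |Q|\<close> is at least \<open>D/3\<close>, so
  suitable \<open>s, t \<in> {-1, 0, 1}\<close> make the fractional vectors \<open>u = 1/2 + s x/2\<close>, \<open>v = 1/2 + t y/2\<close>,
  which lie in \<open>[0, 1]\<close> and have coordinate sums \<open>m/2\<close> and \<open>n/2\<close>, satisfy
  \<open>u\<^sup>T A v = (s t R + t P + s Q)/4 \<le> -D/12\<close>. Finally \<open>u\<close> and then \<open>v\<close> are rounded to indicator
  vectors of sets of half size: by an exchange argument, the minimum of a linear function over
  the \<open>k\<close>-subsets is at most its value at any point of \<open>[0, 1]\<^sup>I\<close> with coordinate sum \<open>k\<close>.\<close>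

lemma sum_le_weighted_sum_if_separated:
  fixes u r :: "'a \<Rightarrow> real"
  assumes "finite I" "X \<subseteq> I"
    and u: "\<And>i. i \<in> I \<Longrightarrow> 0 \<le> u i \<and> u i \<le> 1"
    and sum_u: "sum u I = real (card X)"
    and below: "\<And>i. i \<in> X \<Longrightarrow> r i \<le> t"
    and above: "\<And>j. j \<in> I - X \<Longrightarrow> t \<le> r j"
  shows "sum r X \<le> (\<Sum>i\<in>I. u i * r i)"
proof -
  have split: "sum f I = sum f (I - X) + sum f X" for f :: "'a \<Rightarrow> real"
    by (rule sum.subset_diff[OF assms(2,1)])
  have "0 \<le> (\<Sum>i\<in>I - X. u i * (r i - t)) + (\<Sum>i\<in>X. (1 - u i) * (t - r i))"
    using u below above assms(2) by (intro add_nonneg_nonneg sum_nonneg mult_nonneg_nonneg) auto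
  also have "\<dots> = (\<Sum>i\<in>I. u i * r i) - sum r X - t * (sum u I - real (card X))"
    using split[of "\<lambda>i. u i * r i"] split[of u]
    by (simp add: algebra_simps sum_subtractf sum_distrib_left sum.distrib)
  finally show ?thesis using sum_u by simp
qed

lemma obtain_card_subset_sum_le_weighted_sum:
  fixes u r :: "'a \<Rightarrow> real"
  assumes "finite I"
    and u: "\<And>i. i \<in> I \<Longrightarrow> 0 \<le> u i \<and> u i \<le> 1"
    and sum_u: "sum u I = real k"
  obtains X where "X \<subseteq> I" "card X = k" "sum r X \<le> (\<Sum>i\<in>I. u i * r i)"
proof -
  define F where "F = {X. X \<subseteq> I \<and> card X = k}"
  have "real k \<le> real (card I)"
    using sum_mono[of I u "\<lambda>_. 1"] u sum_u by auto
  then obtain X where "X \<subseteq> I" "card X = k"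
    using obtain_subset_with_card_n[of k I] by auto
  then have "F \<noteq> {}" by (auto simp: F_def)
  moreover have "finite F"
    using \<open>finite I\<close> by (auto simp: F_def)
  ultimately obtain X0 where "X0 \<in> F" and X0_min: "\<And>X. X \<in> F \<Longrightarrow> sum r X0 \<le> sum r X"
    using ex_is_arg_min_if_finite[of F "sum r"] by (auto simp: is_arg_min_linorder)
  then have X0: "X0 \<subseteq> I" "card X0 = k" "finite X0"
    using \<open>finite I\<close> finite_subset by (auto simp: F_def)
  have exchange: "r i \<le> r j" if "i \<in> X0" "j \<in> I - X0" for i j
  proof -
    have "card X0 > 0"
      using X0 that by (auto simp: card_gt_0_iff)
    then have "insert j (X0 - {i}) \<in> F"
      using X0 that by (auto simp: F_def card.insert_remove card_Diff_singleton)
    then have "sum r X0 \<le> sum r (insert j (X0 - {i}))" by (rule X0_min)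
    also have "\<dots> = sum r X0 - r i + r j"
      using X0 that by (simp add: sum_diff1)
    finally show ?thesis by simp
  qed
  define t where "t = (if X0 = {} then Min (r ` (I - X0)) else Max (r ` X0))"
  have "r i \<le> t" if "i \<in> X0" for i
    using that X0 by (auto simp: t_def)
  moreover have "t \<le> r j" if "j \<in> I - X0" for j
  proof (cases "X0 = {}")
    case True
    then show ?thesis using that \<open>finite I\<close> by (simp add: t_def)
  next
    case False
    then show ?thesis using that X0 exchange by (auto simp: t_def)
  qed
  ultimately have "sum r X0 \<le> (\<Sum>i\<in>I. u i * r i)"
    using \<open>finite I\<close> X0 u sum_u by (intro sum_le_weighted_sum_if_separated) auto
  with X0 show thesis by (intro that)
qed

lemma exists_signs_le_neg_abs_sum:
  fixes P Q R :: real
  shows "\<exists>s t. \<bar>s\<bar> \<le> 1 \<and> \<bar>t\<bar> \<le> 1 \<and> 3 * (s * t * R + t * P + s * Q) \<le> - (\<bar>R\<bar> + \<bar>P\<bar> + \<bar>Q\<bar>)"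
proof -
  consider "\<bar>P\<bar> \<le> \<bar>R\<bar>" "\<bar>Q\<bar> \<le> \<bar>R\<bar>" | "\<bar>R\<bar> \<le> \<bar>P\<bar>" "\<bar>Q\<bar> \<le> \<bar>P\<bar>"
    | "\<bar>R\<bar> \<le> \<bar>Q\<bar>" "\<bar>P\<bar> \<le> \<bar>Q\<bar>" by linarith
  then show ?thesis
  proof cases
    case 1
    \<comment> \<open>with \<open>t = - sgn R * s\<close> the product term is \<open>-|R|\<close> and the rest is \<open>s * (Q - sgn R * P) \<le> 0\<close>\<close>
    define s where "s = (if 0 \<le> Q - sgn R * P then -1 else 1 :: real)"
    have "s * (- sgn R * s) * R + (- sgn R * s) * P + s * Q \<le> - \<bar>R\<bar>"
      by (auto simp: s_def abs_sgn algebra_simps)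
    with 1 show ?thesis
      by (intro exI[of _ s] exI[of _ "- sgn R * s"]) (auto simp: s_def abs_sgn_eq)
  next
    case 2
    then show ?thesis by (intro exI[of _ 0] exI[of _ "- sgn P"]) (auto simp: abs_sgn_eq abs_sgn)
  next
    case 3
    then show ?thesis by (intro exI[of _ "- sgn Q"] exI[of _ 0]) (auto simp: abs_sgn_eq abs_sgn)
  qed
qed

definition bilform :: "('a \<Rightarrow> 'b \<Rightarrow> real) \<Rightarrow> 'a set \<Rightarrow> 'b set \<Rightarrow> ('a \<Rightarrow> real) \<Rightarrow> ('b \<Rightarrow> real) \<Rightarrow> real" where
  "bilform A I J x y = (\<Sum>i\<in>I. \<Sum>j\<in>J. x i * A i j * y j)"

lemma bilform_eq_row_sums: "bilform A I J x y = (\<Sum>i\<in>I. x i * (\<Sum>j\<in>J. A i j * y j))"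
  unfolding bilform_def by (simp add: sum_distrib_left mult.assoc)

lemma bilform_transpose: "bilform A I J x y = bilform (\<lambda>j i. A i j) J I y x"
  unfolding bilform_def by (subst sum.swap) (simp add: ac_simps)

lemma bilform_affine:
  "bilform A I J (\<lambda>i. c + s * x i) (\<lambda>j. d + t * y j) =
     c * d * bilform A I J (\<lambda>_. 1) (\<lambda>_. 1) + c * t * bilform A I J (\<lambda>_. 1) y
     + s * d * bilform A I J x (\<lambda>_. 1) + s * t * bilform A I J x y"
  unfolding bilform_def by (simp add: algebra_simps sum.distrib sum_distrib_left)

lemma obtain_card_subset_bilform_le_rows:
  assumes "finite I"
    and u: "\<And>i. i \<in> I \<Longrightarrow> 0 \<le> u i \<and> u i \<le> 1"
    and sum_u: "sum u I = real k"
  obtains X where "X \<subseteq> I" "card X = k"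
    "bilform A I J (\<lambda>i. of_bool (i \<in> X)) y \<le> bilform A I J u y"
proof -
  obtain X where X: "X \<subseteq> I" "card X = k"
    and le: "(\<Sum>i\<in>X. \<Sum>j\<in>J. A i j * y j) \<le> (\<Sum>i\<in>I. u i * (\<Sum>j\<in>J. A i j * y j))"
    by (rule obtain_card_subset_sum_le_weighted_sum[OF assms])
  have "bilform A I J (\<lambda>i. of_bool (i \<in> X)) y = (\<Sum>i\<in>X. \<Sum>j\<in>J. A i j * y j)"
    using X(1) \<open>finite I\<close> by (simp add: bilform_eq_row_sums Int_absorb1)
  with X le show thesis
    by (intro that) (auto simp: bilform_eq_row_sums)
qed

lemma obtain_card_subset_bilform_le_cols:
  assumes "finite J"
    and v: "\<And>j. j \<in> J \<Longrightarrow> 0 \<le> v j \<and> v j \<le> 1"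
    and sum_v: "sum v J = real k"
  obtains Y where "Y \<subseteq> J" "card Y = k"
    "bilform A I J x (\<lambda>j. of_bool (j \<in> Y)) \<le> bilform A I J x v"
proof -
  obtain Y where "Y \<subseteq> J" "card Y = k" and
    "bilform (\<lambda>j i. A i j) J I (\<lambda>j. of_bool (j \<in> Y)) x \<le> bilform (\<lambda>j i. A i j) J I v x"
    by (rule obtain_card_subset_bilform_le_rows[OF assms])
  then show thesis
    by (intro that) (simp_all add: bilform_transpose[of A I J x])
qed

lemma card_div_card_le_1:
  assumes "finite I" "X \<subseteq> I"
  shows "real (card X) / real (card I) \<le> 1"
  using card_mono[OF assms] by (cases "card I") (auto simp: divide_le_eq_1)

lemma centered_indicator_halving:
  fixes s :: real
  assumes "finite I" "X \<subseteq> I" "\<bar>s\<bar> \<le> 1"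
  defines "u \<equiv> \<lambda>i. 1/2 + s/2 * (of_bool (i \<in> X) - real (card X) / real (card I))"
  shows "\<forall>i\<in>I. 0 \<le> u i \<and> u i \<le> 1" and "sum u I = real (card I) / 2"
proof -
  define a where "a = real (card X) / real (card I)"
  have a: "0 \<le> a" "a \<le> 1"
    using card_div_card_le_1[OF assms(1,2)] by (auto simp: a_def)
  have bound: "\<bar>s * (of_bool (i \<in> X) - a)\<bar> \<le> 1" for i
    using a assms(3) by (auto simp: abs_mult intro: mult_le_one)
  have "0 \<le> 1/2 + s/2 * e \<and> 1/2 + s/2 * e \<le> 1" if "\<bar>s * e\<bar> \<le> 1" for e :: real
    using that by (simp add: abs_le_iff field_simps)
  with bound show "\<forall>i\<in>I. 0 \<le> u i \<and> u i \<le> 1"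
    unfolding u_def a_def[symmetric] by blast
  have "real (card X) = real (card I) * a"
    using assms(1,2) by (auto simp: a_def card_0_eq)
  then have centered: "(\<Sum>i\<in>I. of_bool (i \<in> X) - a) = 0"
    using assms(1,2) by (simp add: sum_subtractf Int_absorb1)
  show "sum u I = real (card I) / 2"
    unfolding u_def a_def[symmetric]
    by (simp add: sum_divide_distrib[symmetric] sum.distrib sum_distrib_left[symmetric] centered)
qed

lemma obtain_fractional_halves:
  fixes A :: "'a \<Rightarrow> 'b \<Rightarrow> real"
  assumes "finite I" "finite J" "X \<subseteq> I" "Y \<subseteq> J"
    and centered: "bilform A I J (\<lambda>_. 1) (\<lambda>_. 1) = 0"
  obtains u v where "\<forall>i\<in>I. 0 \<le> u i \<and> u i \<le> 1" "sum u I = real (card I) / 2"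
    "\<forall>j\<in>J. 0 \<le> v j \<and> v j \<le> 1" "sum v J = real (card J) / 2"
    "12 * bilform A I J u v \<le> bilform A I J (\<lambda>i. of_bool (i \<in> X)) (\<lambda>j. of_bool (j \<in> Y))"
proof -
  define a where "a = real (card X) / real (card I)"
  define b where "b = real (card Y) / real (card J)"
  define x where "x = (\<lambda>i. of_bool (i \<in> X) - a)"
  define y where "y = (\<lambda>j. of_bool (j \<in> Y) - b)"
  define P where "P = bilform A I J (\<lambda>_. 1) y"
  define Q where "Q = bilform A I J x (\<lambda>_. 1)"
  define R where "R = bilform A I J x y"
  have indicators: "(\<lambda>i. of_bool (i \<in> X)) = (\<lambda>i. a + 1 * x i)" "(\<lambda>j. of_bool (j \<in> Y)) = (\<lambda>j. b + 1 * y j)"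
    by (auto simp: x_def y_def)
  have expansion: "bilform A I J (\<lambda>i. of_bool (i \<in> X)) (\<lambda>j. of_bool (j \<in> Y)) = R + b * Q + a * P"
    unfolding indicators bilform_affine by (simp add: centered P_def Q_def R_def)
  have "\<bar>a\<bar> \<le> 1" "\<bar>b\<bar> \<le> 1"
    using card_div_card_le_1 assms(1-4) by (auto simp: a_def b_def)
  then have "\<bar>b * Q\<bar> \<le> \<bar>Q\<bar>" "\<bar>a * P\<bar> \<le> \<bar>P\<bar>"
    by (auto simp: abs_mult intro: mult_left_le_one_le)
  then have expansion_ge: "- (\<bar>R\<bar> + \<bar>P\<bar> + \<bar>Q\<bar>) \<le> R + b * Q + a * P" by linarith
  obtain s t where st: "\<bar>s\<bar> \<le> 1" "\<bar>t\<bar> \<le> 1"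
    and signs: "3 * (s * t * R + t * P + s * Q) \<le> - (\<bar>R\<bar> + \<bar>P\<bar> + \<bar>Q\<bar>)"
    using exists_signs_le_neg_abs_sum by blast
  define u where "u = (\<lambda>i. 1/2 + s/2 * x i)"
  define v where "v = (\<lambda>j. 1/2 + t/2 * y j)"
  have "12 * bilform A I J u v = 3 * (s * t * R + t * P + s * Q)"
    unfolding u_def v_def bilform_affine by (simp add: centered P_def Q_def R_def algebra_simps)
  also have "\<dots> \<le> - (\<bar>R\<bar> + \<bar>P\<bar> + \<bar>Q\<bar>)"
    by (rule signs)
  also have "\<dots> \<le> R + b * Q + a * P"
    by (rule expansion_ge)
  also have "\<dots> = bilform A I J (\<lambda>i. of_bool (i \<in> X)) (\<lambda>j. of_bool (j \<in> Y))"
    by (rule expansion[symmetric])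
  finally have uv: "12 * bilform A I J u v \<le> bilform A I J (\<lambda>i. of_bool (i \<in> X)) (\<lambda>j. of_bool (j \<in> Y))" .
  have u: "\<forall>i\<in>I. 0 \<le> u i \<and> u i \<le> 1" "sum u I = real (card I) / 2"
    using centered_indicator_halving[OF assms(1,3) st(1)] unfolding u_def x_def a_def by blast+
  have v: "\<forall>j\<in>J. 0 \<le> v j \<and> v j \<le> 1" "sum v J = real (card J) / 2"
    using centered_indicator_halving[OF assms(2,4) st(2)] unfolding v_def y_def b_def by blast+
  show thesis by (rule that[OF u v uv])
qed

lemma disc_eq_bilform:
  assumes "X \<subseteq> {0..<m}" "Y \<subseteq> {0..<n}"
  shows "disc m n M X Y = bilform (\<lambda>i j. real (M i j) - density m n M) {0..<m} {0..<n}
                            (\<lambda>i. of_bool (i \<in> X)) (\<lambda>j. of_bool (j \<in> Y))"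
proof -
  have "{0..<m} \<inter> X = X" "{0..<n} \<inter> Y = Y" using assms by auto
  then show ?thesis
    by (simp add: disc_def ones_def bilform_eq_row_sums sum_subtractf)
qed

lemma bilform_centered_ones:
  "bilform (\<lambda>i j. real (M i j) - density m n M) {0..<m} {0..<n} (\<lambda>_. 1) (\<lambda>_. 1) = 0"
  by (simp add: bilform_def density_def ones_def sum_subtractf)

lemma neg_disc_attained:
  obtains X Y where "X \<subseteq> {0..<m}" "Y \<subseteq> {0..<n}" "neg_disc m n M = - disc m n M X Y"
proof -
  define S where "S = (\<lambda>(X, Y). - disc m n M X Y) ` (Pow {0..<m} \<times> Pow {0..<n})"
  have "neg_disc m n M = Max S"
    unfolding neg_disc_def S_def by (rule arg_cong[where f = Max]) auto
  moreover have "Max S \<in> S"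
    unfolding S_def by (intro Max_in) auto
  ultimately show thesis
    using that unfolding S_def by auto
qed

theorem claim2p2:
  fixes m n :: nat and M :: "nat \<Rightarrow> nat \<Rightarrow> nat"
  assumes "zero_one_matrix m n M" and "even m" and "even n"
  shows "\<exists>X0 Y0. X0 \<subseteq> {0..<m} \<and> Y0 \<subseteq> {0..<n} \<and> card X0 = m div 2 \<and> card Y0 = n div 2 \<and>
           disc m n M X0 Y0 \<le> - neg_disc m n M / 12"
proof -
  let ?A = "\<lambda>i j. real (M i j) - density m n M" and ?I = "{0..<m}" and ?J = "{0..<n}"
  have fin: "finite ?I" "finite ?J" by simp_all
  obtain X Y where XY: "X \<subseteq> ?I" "Y \<subseteq> ?J" and D: "neg_disc m n M = - disc m n M X Y"
    by (rule neg_disc_attained)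
  obtain u v where u: "\<forall>i\<in>?I. 0 \<le> u i \<and> u i \<le> 1" "sum u ?I = real (card ?I) / 2"
    and v: "\<forall>j\<in>?J. 0 \<le> v j \<and> v j \<le> 1" "sum v ?J = real (card ?J) / 2"
    and uv: "12 * bilform ?A ?I ?J u v \<le> bilform ?A ?I ?J (\<lambda>i. of_bool (i \<in> X)) (\<lambda>j. of_bool (j \<in> Y))"
    by (rule obtain_fractional_halves[OF fin XY bilform_centered_ones])
  have half: "sum u ?I = real (m div 2)" "sum v ?J = real (n div 2)"
    using u(2) v(2) \<open>even m\<close> \<open>even n\<close> by (auto elim!: evenE)
  obtain X0 where X0: "X0 \<subseteq> ?I" "card X0 = m div 2"
    and round_u: "bilform ?A ?I ?J (\<lambda>i. of_bool (i \<in> X0)) v \<le> bilform ?A ?I ?J u v"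
    by (rule obtain_card_subset_bilform_le_rows[OF fin(1) u(1)[rule_format] half(1)])
  obtain Y0 where Y0: "Y0 \<subseteq> ?J" "card Y0 = n div 2"
    and round_v: "bilform ?A ?I ?J (\<lambda>i. of_bool (i \<in> X0)) (\<lambda>j. of_bool (j \<in> Y0))
                    \<le> bilform ?A ?I ?J (\<lambda>i. of_bool (i \<in> X0)) v"
    by (rule obtain_card_subset_bilform_le_cols[OF fin(2) v(1)[rule_format] half(2)])
  have "12 * disc m n M X0 Y0 \<le> disc m n M X Y"
    using uv round_u round_v disc_eq_bilform[OF X0(1) Y0(1), where M = M]
      disc_eq_bilform[OF XY, where M = M] by linarith
  with X0 Y0 D show ?thesis
    by (intro exI[of _ X0] exI[of _ Y0]) auto
qed

end
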